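(* Consider the one-dimensional Euler equations with ratio of specific heats $\gamma>1$, conserved variables $u=(\rho,\rho u,\rho e^t)^T$ with $\rho>0$, $p>0$, $\rho e^t = \frac{p}{\gamma-1}+\frac12\rho u^2$, and entropy variables $$v=\Big[\frac{\gamma-S}{\gamma-1}-\frac12\frac{\rho u^2}{p},\ \frac{\rho u}{p},\ -\frac{\rho}{p}\Big]^T,\qquad S=\ln p-\gamma\ln\rho .$$ Given two states (labelled $n$ and $n+1$), set $z_1=\sqrt{\rho/p}$, $z_2=\sqrt{\rho/p}\,u$, $z_3=\sqrt{\rho p}$ for each state, and for a quantity $z$ let $[z]=z^{n+1}-z^{n}$, $\bar z=\frac12(z^n+z^{n+1})$, and $z^{\ln}=[z]/[\ln z]$ (logarithmic mean, with $z^{\ln}=z^n$ when $z^n=z^{n+1}$). Define $u^*=(u_1,u_2,u_3)^T$ by $$u_1=\bar z_1\, z_3^{\ln},\qquad u_2=u_1\frac{\bar z_2}{\bar z_1},\qquad u_3=\frac{1}{2\bar z_1}\Big(-u_1\frac{1+\gamma}{1-\gamma}\frac{1}{z_1^{\ln}}+u_2\bar z_2-\bar z_3\Big).$$ Then $u^*$ satisfies the entropy-conservation condition in time $$[v]\cdot u^* = [\rho],$$ i.e. $(v^{n+1}-v^n)\cdot u^*=\rho^{n+1}-\rho^n$, where $\rho=v\cdot u-U$ is the temporal flux potential for the entropy $U=-\rho S/(\gamma-1)$. Moreover $u^*$ is consistent: if the two states coincide, $u^*$ equals the common conserved state $u$.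
   Context: Here $\rho$ is density, $u$ velocity, $p$ pressure, $e^t$ total energy per unit mass. The entropy function is $U(u)=-\frac{\rho S}{\gamma-1}$, and $v=(\partial U/\partial u)^T$ are the entropy variables given in the claim. A temporal interface flux $u^*$ between time levels $n$ and $n+1$ is called entropy conservative if $[v]\cdot u^*=[\phi]$ with $\phi=v\cdot u-U$; for this entropy $\phi=\rho$. *)

theory Defs
  imports Complex_Main
begin

definition cons_vars :: "real \<Rightarrow> real \<Rightarrow> real \<Rightarrow> real \<Rightarrow> real \<times> real \<times> real" where
  "cons_vars \<gamma> \<rho> u p = (\<rho>, \<rho> * u, p / (\<gamma> - 1) + \<rho> * u\<^sup>2 / 2)"

definition phys_entropy :: "real \<Rightarrow> real \<Rightarrow> real \<Rightarrow> real" where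
  "phys_entropy \<gamma> \<rho> p = ln p - \<gamma> * ln \<rho>"

definition ent_vars :: "real \<Rightarrow> real \<Rightarrow> real \<Rightarrow> real \<Rightarrow> real \<times> real \<times> real" where
  "ent_vars \<gamma> \<rho> u p =
     ((\<gamma> - phys_entropy \<gamma> \<rho> p) / (\<gamma> - 1) - (\<rho> * u\<^sup>2 / p) / 2, \<rho> * u / p, - \<rho> / p)"

definition dot3 :: "real \<times> real \<times> real \<Rightarrow> real \<times> real \<times> real \<Rightarrow> real" where
  "dot3 a b = fst a * fst b + fst (snd a) * fst (snd b) + snd (snd a) * snd (snd b)"

definition diff3 :: "real \<times> real \<times> real \<Rightarrow> real \<times> real \<times> real \<Rightarrow> real \<times> real \<times> real" where
  "diff3 a b = (fst a - fst b, fst (snd a) - fst (snd b), snd (snd a) - snd (snd b))"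

definition zz1 :: "real \<Rightarrow> real \<Rightarrow> real" where "zz1 \<rho> p = sqrt (\<rho> / p)"
definition zz2 :: "real \<Rightarrow> real \<Rightarrow> real \<Rightarrow> real" where "zz2 \<rho> u p = sqrt (\<rho> / p) * u"
definition zz3 :: "real \<Rightarrow> real \<Rightarrow> real" where "zz3 \<rho> p = sqrt (\<rho> * p)"

definition amean :: "real \<Rightarrow> real \<Rightarrow> real" where "amean a b = (a + b) / 2"

definition logmean :: "real \<Rightarrow> real \<Rightarrow> real" where
  "logmean a b = (if a = b then a else (b - a) / (ln b - ln a))"

definition ustar :: "real \<Rightarrow> real \<Rightarrow> real \<Rightarrow> real \<Rightarrow> real \<Rightarrow> real \<Rightarrow> real \<Rightarrow> real \<times> real \<times> real" where
  "ustar \<gamma> r0 v0 p0 r1 v1 p1 =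
    (let z1b = amean (zz1 r0 p0) (zz1 r1 p1);
         z2b = amean (zz2 r0 v0 p0) (zz2 r1 v1 p1);
         z3b = amean (zz3 r0 p0) (zz3 r1 p1);
         z1l = logmean (zz1 r0 p0) (zz1 r1 p1);
         z3l = logmean (zz3 r0 p0) (zz3 r1 p1);
         u1 = z1b * z3l;
         u2 = u1 * z2b / z1b;
         u3 = (1 / (2 * z1b)) * (- u1 * ((1 + \<gamma>) / (1 - \<gamma>)) * (1 / z1l) + u2 * z2b - z3b)
     in (u1, u2, u3))"

end

theory Submission
  imports Defs
begin

text \<open>In the parameter vector \<open>(a, b, c) = (z\<^sub>1, z\<^sub>2, z\<^sub>3)\<close> a state is \<open>\<rho> = a c\<close>, \<open>u = b / a\<close>,
  \<open>p = c / a\<close>, and the entropy variables become \<open>v = (const + ln c - K ln a - b\<^sup>2 / 2, a b, - a\<^sup>2)\<close>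
  with \<open>K = (1 + \<gamma>) / (1 - \<gamma>)\<close>. Expanding every jump by the discrete product rule
  \<open>[x y] = mean x [y] + mean y [x]\<close> and using \<open>logmean x [ln x] = [x]\<close>, the terms of \<open>[v] \<cdot> u\<^sup>*\<close>
  cancel in pairs down to \<open>mean a [c] + mean c [a] = [a c] = [\<rho>]\<close>; the \<open>1 / z\<^sub>1\<^sup>l\<^sup>n\<close> term of \<open>u\<^sub>3\<close>
  is exactly what removes the \<open>K [ln a]\<close> contribution.\<close>

lemma logmean_pos:
  assumes "a > 0" "b > 0"
  shows "logmean a b > 0"
proof (cases "a < b")
  case True
  then show ?thesis using assms by (simp add: logmean_def divide_pos_pos)
next
  case False
  then show ?thesis using assms by (cases "a = b") (simp_all add: logmean_def divide_neg_neg)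
qed

lemma logmean_mult_ln_diff:
  assumes "a > 0" "b > 0"
  shows "logmean a b * (ln b - ln a) = b - a"
  using assms by (auto simp: logmean_def)

lemma logmean_same [simp]: "logmean a a = a"
  by (simp add: logmean_def)

lemma amean_same [simp]: "amean a a = a"
  by (simp add: amean_def)

lemma zz_param:
  assumes "a > 0" "c > 0"
  shows "zz1 (a * c) (c / a) = a" "zz2 (a * c) (b / a) (c / a) = b" "zz3 (a * c) (c / a) = c"
proof -
  have "(a * c) / (c / a) = a\<^sup>2" "(a * c) * (c / a) = c\<^sup>2"
    using assms by (simp_all add: power2_eq_square)
  then show "zz1 (a * c) (c / a) = a" "zz2 (a * c) (b / a) (c / a) = b" "zz3 (a * c) (c / a) = c"
    using assms by (simp_all add: zz1_def zz2_def zz3_def)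
qed

lemma state_param_vector:
  fixes r v p :: real
  assumes "r > 0" "p > 0"
  obtains a b c where "a > 0" "c > 0" "r = a * c" "v = b / a" "p = c / a"
proof
  show "sqrt (r / p) > 0" "sqrt (r * p) > 0" using assms by simp_all
  show "r = sqrt (r / p) * sqrt (r * p)"
    using assms by (simp add: real_sqrt_mult[symmetric] power2_eq_square)
  show "p = sqrt (r * p) / sqrt (r / p)"
    using assms by (simp add: real_sqrt_divide[symmetric] power2_eq_square)
  show "v = sqrt (r / p) * v / sqrt (r / p)" using assms by simp
qed

lemma ent_vars_param:
  assumes "\<gamma> \<noteq> 1" "a > 0" "c > 0"
  shows "ent_vars \<gamma> (a * c) (b / a) (c / a)
       = (\<gamma> / (\<gamma> - 1) + ln c - (1 + \<gamma>) / (1 - \<gamma>) * ln a - b\<^sup>2 / 2, a * b, - a\<^sup>2)"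
proof -
  have K: "(1 + \<gamma>) / (1 - \<gamma>) = - ((1 + \<gamma>) / (\<gamma> - 1))"
    by (metis minus_diff_eq divide_minus_right)
  have "(\<gamma> - 1) * ln c / (\<gamma> - 1) = ln c" using assms(1) by simp
  then have "(\<gamma> - phys_entropy \<gamma> (a * c) (c / a)) / (\<gamma> - 1)
      = \<gamma> / (\<gamma> - 1) + ln c - (1 + \<gamma>) / (1 - \<gamma>) * ln a"
    using assms(2,3) unfolding K
    by (simp add: phys_entropy_def ln_mult ln_div diff_divide_distrib add_divide_distrib algebra_simps)
  moreover have "a * c * (b / a)\<^sup>2 / (c / a) = b\<^sup>2" "a * c * (b / a) / (c / a) = a * b"
    "(a * c) / (c / a) = a\<^sup>2"
    using assms(2,3) by (simp_all add: field_simps power2_eq_square)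
  ultimately show ?thesis
    by (simp add: ent_vars_def)
qed

lemma mult_jump_amean: "x1 * y1 - x0 * y0 = amean x0 x1 * (y1 - y0) + amean y0 y1 * (x1 - x0)"
  by (simp add: amean_def field_simps)

lemma ustar_entropy_conservative_param:
  assumes "\<gamma> \<noteq> 1" "a0 > 0" "c0 > 0" "a1 > 0" "c1 > 0"
  shows "dot3 (diff3 (ent_vars \<gamma> (a1 * c1) (b1 / a1) (c1 / a1)) (ent_vars \<gamma> (a0 * c0) (b0 / a0) (c0 / a0)))
           (ustar \<gamma> (a0 * c0) (b0 / a0) (c0 / a0) (a1 * c1) (b1 / a1) (c1 / a1))
         = a1 * c1 - a0 * c0"
proof -
  define K where "K = (1 + \<gamma>) / (1 - \<gamma>)"
  define A where "A = logmean a0 a1"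
  define C where "C = logmean c0 c1"
  define am where "am = amean a0 a1"
  define bm where "bm = amean b0 b1"
  define cm where "cm = amean c0 c1"
  have A_pos: "A > 0"
    using assms logmean_pos unfolding A_def by simp
  have ln_jump: "ln a1 - ln a0 = (a1 - a0) / A"
    using assms A_pos logmean_mult_ln_diff[of a0 a1] unfolding A_def by (simp add: field_simps)
  have C_jump: "C * (ln c1 - ln c0) = c1 - c0"
    using assms logmean_mult_ln_diff unfolding C_def by simp
  have am: "am > 0" using assms unfolding am_def amean_def by simp
  have jumps: "b1 * b1 - b0 * b0 = 2 * bm * (b1 - b0)" "a1 * b1 - a0 * b0 = am * (b1 - b0) + bm * (a1 - a0)"
    "a1 * a1 - a0 * a0 = 2 * am * (a1 - a0)"
    unfolding am_def bm_def mult_jump_amean by simp_all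
  have "dot3 (diff3 (ent_vars \<gamma> (a1 * c1) (b1 / a1) (c1 / a1)) (ent_vars \<gamma> (a0 * c0) (b0 / a0) (c0 / a0)))
           (ustar \<gamma> (a0 * c0) (b0 / a0) (c0 / a0) (a1 * c1) (b1 / a1) (c1 / a1))
      = (ln c1 - ln c0 - K * (ln a1 - ln a0) - (b1 * b1 - b0 * b0) / 2) * (am * C)
        + (a1 * b1 - a0 * b0) * (C * bm)
        - (a1 * a1 - a0 * a0) * (C * bm * bm - am * C * K / A - cm) / (2 * am)"
    using assms am A_pos
    by (simp add: ent_vars_param ustar_def zz_param Let_def dot3_def diff3_def
        K_def[symmetric] A_def[symmetric] C_def[symmetric] am_def[symmetric] bm_def[symmetric]
        cm_def[symmetric]) (simp add: field_simps power2_eq_square)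
  also have "\<dots> = am * (C * (ln c1 - ln c0)) - K * am * C * ((ln a1 - ln a0) - (a1 - a0) / A)
                  + cm * (a1 - a0)"
    unfolding jumps using am A_pos by (simp add: field_simps)
  also have "\<dots> = am * (c1 - c0) + cm * (a1 - a0)"
    unfolding C_jump ln_jump by simp
  also have "\<dots> = a1 * c1 - a0 * c0"
    unfolding am_def cm_def mult_jump_amean ..
  finally show ?thesis .
qed

lemma ustar_consistent_param:
  assumes "\<gamma> \<noteq> 1" "a > 0" "c > 0"
  shows "ustar \<gamma> (a * c) (b / a) (c / a) (a * c) (b / a) (c / a) = cons_vars \<gamma> (a * c) (b / a) (c / a)"
proof -
  have "\<gamma> - 1 \<noteq> 0" "1 - \<gamma> \<noteq> 0" using assms(1) by simp_all
  then show ?thesis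
    using assms(2,3)
    by (simp add: ustar_def zz_param Let_def cons_vars_def field_simps power2_eq_square)
qed

theorem mainTheorem1:
  fixes \<gamma> r0 v0 p0 r1 v1 p1 :: real
  assumes "\<gamma> > 1" and "r0 > 0" and "p0 > 0" and "r1 > 0" and "p1 > 0"
  shows "dot3 (diff3 (ent_vars \<gamma> r1 v1 p1) (ent_vars \<gamma> r0 v0 p0)) (ustar \<gamma> r0 v0 p0 r1 v1 p1) = r1 - r0
         \<and> ((r0, v0, p0) = (r1, v1, p1) \<longrightarrow> ustar \<gamma> r0 v0 p0 r1 v1 p1 = cons_vars \<gamma> r0 v0 p0)"
proof
  have "\<gamma> \<noteq> 1" using assms(1) by simp
  obtain a0 b0 c0 where z0: "a0 > 0" "c0 > 0" "r0 = a0 * c0" "v0 = b0 / a0" "p0 = c0 / a0"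
    using state_param_vector[OF assms(2,3)] .
  obtain a1 b1 c1 where z1: "a1 > 0" "c1 > 0" "r1 = a1 * c1" "v1 = b1 / a1" "p1 = c1 / a1"
    using state_param_vector[OF assms(4,5)] .
  show "dot3 (diff3 (ent_vars \<gamma> r1 v1 p1) (ent_vars \<gamma> r0 v0 p0)) (ustar \<gamma> r0 v0 p0 r1 v1 p1) = r1 - r0"
    unfolding z0(3-5) z1(3-5)
    using ustar_entropy_conservative_param[OF \<open>\<gamma> \<noteq> 1\<close> z0(1,2) z1(1,2)] .
  show "(r0, v0, p0) = (r1, v1, p1) \<longrightarrow> ustar \<gamma> r0 v0 p0 r1 v1 p1 = cons_vars \<gamma> r0 v0 p0"
    unfolding z0(3-5) using ustar_consistent_param[OF \<open>\<gamma> \<noteq> 1\<close> z0(1,2)] by auto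
qed

end
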